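(* Let $\mathfrak k$ be the maximal compact subalgebra of a Kac--Moody algebra over a field $F$ of characteristic $0$ with simply laced diagram $D=(V,E)$, with Berman generators $X_1,\dots,X_n$, and let $L=F(I)$ with $I^2=-1$. (a) If $\rho:\mathfrak k\to\operatorname{End}(L^s)$ is a generalized spin representation, then $\rho(X_i)\rho(X_j)=\rho(X_j)\rho(X_i)$ whenever $i\ne j$ and $\{v_i,v_j\}\notin E$, and $\rho(X_i)\rho(X_j)=-\rho(X_j)\rho(X_i)$ whenever $\{v_i,v_j\}\in E$. (b) Conversely, if $A_1,\dots,A_n\in L^{s\times s}$ satisfy $A_i^2=-\tfrac14\mathrm{id}_s$ for all $i$, $A_iA_j=A_jA_i$ for $i\ne j$ non-adjacent, and $A_iA_j=-A_jA_i$ for $v_i,v_j$ adjacent, then $X_i\mapsto A_i$ extends to a Lie algebra homomorphism $\mathfrak k\to\operatorname{End}(L^s)$, which is a generalized spin representation.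
   Context: Berman's theorem: $\mathfrak k$ is generated by $X_i=e_i-f_i$ and is the Lie algebra with generators $X_1,\dots,X_n$ and defining relations $[X_i,[X_i,X_j]]=-X_j$ if $v_i,v_j$ are adjacent and $[X_i,X_j]=0$ for non-adjacent $i\ne j$. Here $\mathfrak k$ is viewed as a Lie algebra over $F$ and $\operatorname{End}(L^s)$ as an $F$-Lie algebra with the commutator bracket. A generalized spin representation of $\mathfrak k$ is a Lie algebra homomorphism $\rho:\mathfrak k\to\operatorname{End}(L^s)$ (for some $s\ge1$) such that $\rho(X_i)^2=-\tfrac14\,\mathrm{id}_s$ for $i=1,\dots,n$. *)

theory Defs
  imports "Jordan_Normal_Form.Matrix"
begin

datatype 'f lie_term =
    Gen nat
  | LZero
  | LAdd "'f lie_term" "'f lie_term"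
  | LSmul 'f "'f lie_term"
  | LBr "'f lie_term" "'f lie_term"

fun gens :: "'f lie_term \<Rightarrow> nat set" where
  "gens (Gen i) = {i}"
| "gens LZero = {}"
| "gens (LAdd x y) = gens x \<union> gens y"
| "gens (LSmul c x) = gens x"
| "gens (LBr x y) = gens x \<union> gens y"

definition kterm :: "nat \<Rightarrow> 'f lie_term \<Rightarrow> bool" where
  "kterm n t \<longleftrightarrow> gens t \<subseteq> {1..n}"

text \<open>The congruence defining the Lie algebra k (Berman presentation):
  F-Lie algebra axioms plus the defining relations for the diagram with
  adjacency relation E on vertices 1..n.\<close>
inductive kcong :: "nat \<Rightarrow> (nat \<Rightarrow> nat \<Rightarrow> bool) \<Rightarrow> 'f::field lie_term \<Rightarrow> 'f lie_term \<Rightarrow> bool"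
  for n :: nat and E :: "nat \<Rightarrow> nat \<Rightarrow> bool" where
  refl: "kcong n E x x"
| sym: "kcong n E x y \<Longrightarrow> kcong n E y x"
| trans: "kcong n E x y \<Longrightarrow> kcong n E y z \<Longrightarrow> kcong n E x z"
| cong_add: "kcong n E x x' \<Longrightarrow> kcong n E y y' \<Longrightarrow> kcong n E (LAdd x y) (LAdd x' y')"
| cong_smul: "kcong n E x x' \<Longrightarrow> kcong n E (LSmul c x) (LSmul c x')"
| cong_br: "kcong n E x x' \<Longrightarrow> kcong n E y y' \<Longrightarrow> kcong n E (LBr x y) (LBr x' y')"
| add_assoc: "kcong n E (LAdd (LAdd x y) z) (LAdd x (LAdd y z))"
| add_comm: "kcong n E (LAdd x y) (LAdd y x)"
| add_zero: "kcong n E (LAdd x LZero) x"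
| add_neg: "kcong n E (LAdd x (LSmul (-1) x)) LZero"
| smul_smul: "kcong n E (LSmul a (LSmul b x)) (LSmul (a * b) x)"
| smul_one: "kcong n E (LSmul 1 x) x"
| smul_add: "kcong n E (LSmul a (LAdd x y)) (LAdd (LSmul a x) (LSmul a y))"
| add_smul: "kcong n E (LSmul (a + b) x) (LAdd (LSmul a x) (LSmul b x))"
| br_add_left: "kcong n E (LBr (LAdd x y) z) (LAdd (LBr x z) (LBr y z))"
| br_add_right: "kcong n E (LBr x (LAdd y z)) (LAdd (LBr x y) (LBr x z))"
| br_smul_left: "kcong n E (LBr (LSmul a x) y) (LSmul a (LBr x y))"
| br_smul_right: "kcong n E (LBr x (LSmul a y)) (LSmul a (LBr x y))"
| br_alt: "kcong n E (LBr x x) LZero"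
| jacobi: "kcong n E (LAdd (LBr x (LBr y z)) (LAdd (LBr y (LBr z x)) (LBr z (LBr x y)))) LZero"
| rel_adj: "\<lbrakk>i \<in> {1..n}; j \<in> {1..n}; E i j\<rbrakk> \<Longrightarrow>
      kcong n E (LBr (Gen i) (LBr (Gen i) (Gen j))) (LSmul (-1) (Gen j))"
| rel_nonadj: "\<lbrakk>i \<in> {1..n}; j \<in> {1..n}; i \<noteq> j; \<not> E i j\<rbrakk> \<Longrightarrow>
      kcong n E (LBr (Gen i) (Gen j)) LZero"

text \<open>An F-Lie algebra homomorphism k -> End(L^s) (s x s matrices over L, commutator
  bracket, F acting on L via the embedding emb), given on representatives.\<close>
definition k_lie_hom :: "nat \<Rightarrow> (nat \<Rightarrow> nat \<Rightarrow> bool) \<Rightarrow> ('f::field \<Rightarrow> 'l::field) \<Rightarrow> nat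
    \<Rightarrow> ('f lie_term \<Rightarrow> 'l mat) \<Rightarrow> bool" where
  "k_lie_hom n E emb s \<rho> \<longleftrightarrow>
     (\<forall>t. kterm n t \<longrightarrow> \<rho> t \<in> carrier_mat s s) \<and>
     (\<forall>t u. kterm n t \<longrightarrow> kterm n u \<longrightarrow> kcong n E t u \<longrightarrow> \<rho> t = \<rho> u) \<and>
     (\<forall>t u. kterm n t \<longrightarrow> kterm n u \<longrightarrow>
         \<rho> (LAdd t u) = \<rho> t + \<rho> u \<and> \<rho> (LBr t u) = \<rho> t * \<rho> u - \<rho> u * \<rho> t) \<and>
     (\<forall>c t. kterm n t \<longrightarrow> \<rho> (LSmul c t) = emb c \<cdot>\<^sub>m \<rho> t)"

definition gen_spin_rep :: "nat \<Rightarrow> (nat \<Rightarrow> nat \<Rightarrow> bool) \<Rightarrow> ('f::field \<Rightarrow> 'l::field) \<Rightarrow> nat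
    \<Rightarrow> ('f lie_term \<Rightarrow> 'l mat) \<Rightarrow> bool" where
  "gen_spin_rep n E emb s \<rho> \<longleftrightarrow> s \<ge> 1 \<and> k_lie_hom n E emb s \<rho> \<and>
     (\<forall>i\<in>{1..n}. \<rho> (Gen i) * \<rho> (Gen i) = (- (1/4)) \<cdot>\<^sub>m 1\<^sub>m s)"

end

theory Submission
  imports Defs
begin

(* The whole theorem reduces to one identity for square matrices a, b with a^2 = -1/4 id:
   since [a,[a,b]] = a^2 b - 2aba + b a^2 = -b/2 - 2aba, the Berman relation [a,[a,b]] = -b
   holds iff aba = b/4, and (multiplying by a on the right) iff ab = -ba.

   For (b) the matrices A_i are extended to all Lie terms by evaluation,
   and evaluation respects the defining congruence of k: the Lie algebra axioms hold for the
   commutator bracket, and the defining relations follow from the key identity.  The main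
   theorem combines the two directions. *)

definition scalar_hom :: "('f::ring_1 \<Rightarrow> 'l::ring_1) \<Rightarrow> bool" where
  "scalar_hom emb \<longleftrightarrow> emb 1 = 1 \<and> (\<forall>a b. emb (a + b) = emb a + emb b) \<and>
     (\<forall>a b. emb (a * b) = emb a * emb b)"

lemma additive_zero:
  fixes emb :: "'f::ring_1 \<Rightarrow> 'l::ring_1"
  assumes emb_add: "\<And>a b. emb (a + b) = emb a + emb b"
  shows "emb 0 = 0"
proof -
  have "emb 0 + emb 0 = emb 0 + 0" using emb_add[of 0 0] by simp
  thus ?thesis by (rule add_left_imp_eq)
qed

lemma scalar_hom_minus_one:
  assumes "scalar_hom emb"
  shows "emb (-1) = -1"
proof -
  have add: "\<And>a b. emb (a + b) = emb a + emb b" and one: "emb 1 = 1"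
    using assms by (simp_all add: scalar_hom_def)
  have "emb (-1) + 1 = emb (-1 + 1)" using add[of "-1" 1] one by simp
  also have "\<dots> = 0" using additive_zero[of emb] add by simp
  finally show ?thesis by (simp add: eq_neg_iff_add_eq_0)
qed

lemma two_neq_zero_via_emb:
  fixes emb :: "'f::field_char_0 \<Rightarrow> 'l::ring_1"
  assumes "inj emb" and emb_one: "emb 1 = 1" and emb_add: "\<And>a b. emb (a + b) = emb a + emb b"
  shows "(2::'l) \<noteq> 0"
proof -
  have "emb 2 = 2" using emb_add[of 1 1] emb_one by simp
  moreover have "emb 2 \<noteq> emb 0" using \<open>inj emb\<close> by (simp add: inj_eq)
  ultimately show ?thesis using additive_zero[of emb] emb_add by simp
qed

(* Matrix algebra.  Distributivity and scalar laws for s x s matrices, instantiated so that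
   the simplifier can discharge their carrier side conditions. *)
lemmas square_mat_distribs =
  mult_minus_distrib_mat[where nr=s and n=s and nc=s] minus_mult_distrib_mat[where nr=s and n=s and nc=s]
  mult_add_distrib_mat[where nr=s and n=s and nc=s] add_mult_distrib_mat[where nr=s and n=s and nc=s]
  mult_smult_distrib[where nr=s and n=s and nc=s] mult_smult_assoc_mat[where nr=s and n=s and nc=s] for s

lemma commutator_eq_zero_iff:
  fixes a b :: "'a::ring mat"
  assumes "a \<in> carrier_mat s s" "b \<in> carrier_mat s s"
  shows "a * b - b * a = 0\<^sub>m s s \<longleftrightarrow> a * b = b * a"
proof
  assume h: "a * b - b * a = 0\<^sub>m s s"
  show "a * b = b * a"
  proof (rule eq_matI)
    fix i j assume "i < dim_row (b * a)" "j < dim_col (b * a)"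
    with assms show "(a * b) $$ (i, j) = (b * a) $$ (i, j)"
      using arg_cong[OF h, of "\<lambda>m. m $$ (i, j)"] by simp
  qed (use assms in auto)
qed (use assms in \<open>auto intro: eq_matI\<close>)

lemma add_self_mat_eq_zero:
  fixes x :: "'a::ring mat"
  assumes "x \<in> carrier_mat s s" and "x + x = x"
  shows "x = 0\<^sub>m s s"
proof (rule eq_matI)
  fix i j assume ij: "i < dim_row (0\<^sub>m s s :: 'a mat)" "j < dim_col (0\<^sub>m s s :: 'a mat)"
  have "(x + x) $$ (i, j) = x $$ (i, j)" by (rule arg_cong[OF assms(2)])
  hence "x $$ (i, j) + x $$ (i, j) = x $$ (i, j)"
    using assms(1) ij by (subst (asm) index_add_mat) auto
  thus "x $$ (i, j) = 0\<^sub>m s s $$ (i, j)" using ij by simp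
qed (use assms in auto)

lemma jacobi_mat:
  fixes x y z :: "'a::field mat"
  assumes x: "x \<in> carrier_mat s s" and y: "y \<in> carrier_mat s s" and z: "z \<in> carrier_mat s s"
  shows "(x * (y * z - z * y) - (y * z - z * y) * x) + ((y * (z * x - x * z) - (z * x - x * z) * y)
     + (z * (x * y - y * x) - (x * y - y * x) * z)) = 0\<^sub>m s s"
proof -
  have "(x * (y * z - z * y) - (y * z - z * y) * x) + ((y * (z * x - x * z) - (z * x - x * z) * y)
     + (z * (x * y - y * x) - (x * y - y * x) * z)) =
    (x * y * z - x * z * y - (y * z * x - z * y * x)) + ((y * z * x - y * x * z - (z * x * y - x * z * y))
     + (z * x * y - z * y * x - (x * y * z - y * x * z)))"
    using x y z by (simp add: square_mat_distribs[where s=s])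
  also have "\<dots> = 0\<^sub>m s s" using x y z by (intro eq_matI) auto
  finally show ?thesis .
qed

lemma double_commutator_scalar_square:
  fixes a b :: "'a::field mat"
  assumes a: "a \<in> carrier_mat s s" and b: "b \<in> carrier_mat s s"
    and sq: "a * a = c \<cdot>\<^sub>m 1\<^sub>m s"
  shows "a * (a * b - b * a) - (a * b - b * a) * a = (2 * c) \<cdot>\<^sub>m b - 2 \<cdot>\<^sub>m (a * b * a)"
proof -
  have "a * (a * b - b * a) - (a * b - b * a) * a
      = (a * a) * b - a * b * a - (a * b * a - b * (a * a))"
    using a b by (simp add: square_mat_distribs[where s=s])
  also have "\<dots> = c \<cdot>\<^sub>m b - a * b * a - (a * b * a - c \<cdot>\<^sub>m b)"
    using a b by (simp add: sq square_mat_distribs[where s=s])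
  also have "\<dots> = (2 * c) \<cdot>\<^sub>m b - 2 \<cdot>\<^sub>m (a * b * a)"
    using a b by (intro eq_matI) (auto simp: algebra_simps)
  finally show ?thesis .
qed

lemma anticommute_iff_sandwich:
  fixes a b :: "'a::field mat"
  assumes a: "a \<in> carrier_mat s s" and b: "b \<in> carrier_mat s s"
    and sq: "a * a = c \<cdot>\<^sub>m 1\<^sub>m s" and c: "c \<noteq> 0"
  shows "a * b = - (b * a) \<longleftrightarrow> a * b * a = (- c) \<cdot>\<^sub>m b"
proof
  assume "a * b = - (b * a)"
  hence "a * b * a = - (b * (a * a))" using a b by simp
  also have "\<dots> = (- c) \<cdot>\<^sub>m b" using b by (intro eq_matI) (auto simp: sq)
  finally show "a * b * a = (- c) \<cdot>\<^sub>m b" .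
next
  assume sandwich: "a * b * a = (- c) \<cdot>\<^sub>m b"
  have "c \<cdot>\<^sub>m (a * b) = a * b * (a * a)" using a b by (simp add: sq square_mat_distribs[where s=s])
  also have "\<dots> = (a * b * a) * a" using a b by (metis assoc_mult_mat mult_carrier_mat)
  also have "\<dots> = c \<cdot>\<^sub>m (- (b * a))" using a b by (intro eq_matI) (auto simp: sandwich)
  finally have scaled: "c \<cdot>\<^sub>m (a * b) = c \<cdot>\<^sub>m (- (b * a))" .
  show "a * b = - (b * a)"
  proof (rule eq_matI)
    fix i j assume ij: "i < dim_row (- (b * a))" "j < dim_col (- (b * a))"
    have "c * (a * b) $$ (i, j) = c * (- (b * a)) $$ (i, j)"
      using arg_cong[OF scaled, of "\<lambda>m. m $$ (i, j)"] ij a b by simp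
    thus "(a * b) $$ (i, j) = (- (b * a)) $$ (i, j)" using c by simp
  qed (use a b in auto)
qed

lemma smult_half_quarter_iff:
  fixes b m :: "'a::field mat"
  assumes b: "b \<in> carrier_mat s s" and m: "m \<in> carrier_mat s s" and two: "(2::'a) \<noteq> 0"
  shows "(- (1/2)) \<cdot>\<^sub>m b - 2 \<cdot>\<^sub>m m = (-1) \<cdot>\<^sub>m b \<longleftrightarrow> m = (1/4) \<cdot>\<^sub>m b"
proof -
  have "(4::'a) \<noteq> 0" using two by (metis mult_2 mult_eq_0_iff numeral_Bit0)
  with b m two show ?thesis by (auto simp: mat_eq_iff field_simps)
qed

lemma spin_double_commutator_iff:
  fixes a b :: "'a::field mat"
  assumes a: "a \<in> carrier_mat s s" and b: "b \<in> carrier_mat s s"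
    and sq: "a * a = (- (1/4)) \<cdot>\<^sub>m 1\<^sub>m s" and two: "(2::'a) \<noteq> 0"
  shows "a * (a * b - b * a) - (a * b - b * a) * a = (-1) \<cdot>\<^sub>m b \<longleftrightarrow> a * b = - (b * a)"
proof -
  have four: "(4::'a) \<noteq> 0" using two by (metis mult_2 mult_eq_0_iff numeral_Bit0)
  have "a * (a * b - b * a) - (a * b - b * a) * a = (-1) \<cdot>\<^sub>m b
        \<longleftrightarrow> (- (1/2)) \<cdot>\<^sub>m b - 2 \<cdot>\<^sub>m (a * b * a) = (-1) \<cdot>\<^sub>m b"
  proof -
    have "2 * (- (1/4)) = (- (1/2) :: 'a)" using two four by (simp add: field_simps)
    thus ?thesis by (simp only: double_commutator_scalar_square[OF a b sq])
  qed
  also have "\<dots> \<longleftrightarrow> a * b * a = (1/4) \<cdot>\<^sub>m b"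
    using smult_half_quarter_iff[OF b _ two] a b by simp
  also have "\<dots> \<longleftrightarrow> a * b = - (b * a)"
    using anticommute_iff_sandwich[OF a b sq] four by simp
  finally show ?thesis .
qed

lemma kterm_simps [simp]:
  "kterm n (Gen i) \<longleftrightarrow> i \<in> {1..n}"
  "kterm n LZero"
  "kterm n (LAdd t u) \<longleftrightarrow> kterm n t \<and> kterm n u"
  "kterm n (LSmul c t) \<longleftrightarrow> kterm n t"
  "kterm n (LBr t u) \<longleftrightarrow> kterm n t \<and> kterm n u"
  by (auto simp: kterm_def)

lemma
  assumes "k_lie_hom n E emb s \<rho>"
  shows k_lie_hom_carrier: "kterm n t \<Longrightarrow> \<rho> t \<in> carrier_mat s s"
    and k_lie_hom_cong: "kterm n t \<Longrightarrow> kterm n u \<Longrightarrow> kcong n E t u \<Longrightarrow> \<rho> t = \<rho> u"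
    and k_lie_hom_add: "kterm n t \<Longrightarrow> kterm n u \<Longrightarrow> \<rho> (LAdd t u) = \<rho> t + \<rho> u"
    and k_lie_hom_br: "kterm n t \<Longrightarrow> kterm n u \<Longrightarrow> \<rho> (LBr t u) = \<rho> t * \<rho> u - \<rho> u * \<rho> t"
    and k_lie_hom_smul: "kterm n t \<Longrightarrow> \<rho> (LSmul c t) = emb c \<cdot>\<^sub>m \<rho> t"
  using assms unfolding k_lie_hom_def by auto

(* A Lie homomorphism maps 0 to the zero matrix, because 0 + 0 = 0 in k. *)
lemma k_lie_hom_zero:
  assumes hom: "k_lie_hom n E emb s \<rho>"
  shows "\<rho> LZero = 0\<^sub>m s s"
proof (rule add_self_mat_eq_zero)
  show "\<rho> LZero \<in> carrier_mat s s" using k_lie_hom_carrier[OF hom] by simp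
  have "\<rho> LZero + \<rho> LZero = \<rho> (LAdd LZero LZero)" using k_lie_hom_add[OF hom] by simp
  also have "\<dots> = \<rho> LZero" by (intro k_lie_hom_cong[OF hom] kcong.add_zero) simp_all
  finally show "\<rho> LZero + \<rho> LZero = \<rho> LZero" .
qed

lemma k_lie_hom_nonadjacent_commute:
  assumes hom: "k_lie_hom n E emb s \<rho>"
    and i: "i \<in> {1..n}" and j: "j \<in> {1..n}" and "i \<noteq> j" and "\<not> E i j"
  shows "\<rho> (Gen i) * \<rho> (Gen j) = \<rho> (Gen j) * \<rho> (Gen i)"
proof -
  have "\<rho> (Gen i) * \<rho> (Gen j) - \<rho> (Gen j) * \<rho> (Gen i) = \<rho> (LBr (Gen i) (Gen j))"
    using k_lie_hom_br[OF hom] i j by simp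
  also have "\<dots> = \<rho> LZero"
    using assms(2-5) by (intro k_lie_hom_cong[OF hom] kcong.rel_nonadj) simp_all
  also have "\<dots> = 0\<^sub>m s s" using k_lie_hom_zero[OF hom] .
  finally show ?thesis
    using commutator_eq_zero_iff k_lie_hom_carrier[OF hom] i j by (metis kterm_simps(1))
qed

lemma k_lie_hom_adjacent_double_commutator:
  assumes hom: "k_lie_hom n E emb s \<rho>" and emb_minus_one: "emb (-1) = -1"
    and i: "i \<in> {1..n}" and j: "j \<in> {1..n}" and "E i j"
  shows "\<rho> (Gen i) * (\<rho> (Gen i) * \<rho> (Gen j) - \<rho> (Gen j) * \<rho> (Gen i))
         - (\<rho> (Gen i) * \<rho> (Gen j) - \<rho> (Gen j) * \<rho> (Gen i)) * \<rho> (Gen i) = (-1) \<cdot>\<^sub>m \<rho> (Gen j)"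
proof -
  have "\<rho> (Gen i) * (\<rho> (Gen i) * \<rho> (Gen j) - \<rho> (Gen j) * \<rho> (Gen i))
         - (\<rho> (Gen i) * \<rho> (Gen j) - \<rho> (Gen j) * \<rho> (Gen i)) * \<rho> (Gen i)
      = \<rho> (LBr (Gen i) (LBr (Gen i) (Gen j)))"
    using k_lie_hom_br[OF hom] i j by simp
  also have "\<dots> = \<rho> (LSmul (-1) (Gen j))"
    using assms(3-5) by (intro k_lie_hom_cong[OF hom] kcong.rel_adj) simp_all
  also have "\<dots> = (-1) \<cdot>\<^sub>m \<rho> (Gen j)"
    using k_lie_hom_smul[OF hom] j emb_minus_one by simp
  finally show ?thesis .
qed

lemma gen_spin_rep_relations:
  fixes \<rho> :: "'f::field lie_term \<Rightarrow> 'l::field mat"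
  assumes spin: "gen_spin_rep n E emb s \<rho>"
    and emb_minus_one: "emb (-1) = -1" and two: "(2::'l) \<noteq> 0"
    and i: "i \<in> {1..n}" and j: "j \<in> {1..n}"
  shows "i \<noteq> j \<and> \<not> E i j \<Longrightarrow> \<rho> (Gen i) * \<rho> (Gen j) = \<rho> (Gen j) * \<rho> (Gen i)"
    and "E i j \<Longrightarrow> \<rho> (Gen i) * \<rho> (Gen j) = - (\<rho> (Gen j) * \<rho> (Gen i))"
proof -
  have hom: "k_lie_hom n E emb s \<rho>" and sq: "\<rho> (Gen i) * \<rho> (Gen i) = (- (1/4)) \<cdot>\<^sub>m 1\<^sub>m s"
    using spin i unfolding gen_spin_rep_def by auto
  have ci: "\<rho> (Gen i) \<in> carrier_mat s s" and cj: "\<rho> (Gen j) \<in> carrier_mat s s"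
    using k_lie_hom_carrier[OF hom] i j by simp_all
  show "i \<noteq> j \<and> \<not> E i j \<Longrightarrow> \<rho> (Gen i) * \<rho> (Gen j) = \<rho> (Gen j) * \<rho> (Gen i)"
    using k_lie_hom_nonadjacent_commute[OF hom i j] by blast
  show "E i j \<Longrightarrow> \<rho> (Gen i) * \<rho> (Gen j) = - (\<rho> (Gen j) * \<rho> (Gen i))"
    using k_lie_hom_adjacent_double_commutator[OF hom emb_minus_one i j]
      spin_double_commutator_iff[OF ci cj sq two] by blast
qed

definition spin_system :: "nat \<Rightarrow> (nat \<Rightarrow> nat \<Rightarrow> bool) \<Rightarrow> nat \<Rightarrow> (nat \<Rightarrow> 'a::field mat) \<Rightarrow> bool" where
  "spin_system n E s A \<longleftrightarrow>
     (\<forall>i\<in>{1..n}. A i \<in> carrier_mat s s) \<and>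
     (\<forall>i\<in>{1..n}. A i * A i = (- (1/4)) \<cdot>\<^sub>m 1\<^sub>m s) \<and>
     (\<forall>i\<in>{1..n}. \<forall>j\<in>{1..n}. i \<noteq> j \<and> \<not> E i j \<longrightarrow> A i * A j = A j * A i) \<and>
     (\<forall>i\<in>{1..n}. \<forall>j\<in>{1..n}. E i j \<longrightarrow> A i * A j = - (A j * A i))"

fun eval_mat :: "nat \<Rightarrow> nat \<Rightarrow> (nat \<Rightarrow> 'l::field mat) \<Rightarrow> ('f \<Rightarrow> 'l) \<Rightarrow> 'f lie_term \<Rightarrow> 'l mat" where
  "eval_mat s n A emb (Gen i) = (if i \<in> {1..n} then A i else 0\<^sub>m s s)"
| "eval_mat s n A emb LZero = 0\<^sub>m s s"
| "eval_mat s n A emb (LAdd x y) = eval_mat s n A emb x + eval_mat s n A emb y"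
| "eval_mat s n A emb (LSmul c x) = emb c \<cdot>\<^sub>m eval_mat s n A emb x"
| "eval_mat s n A emb (LBr x y) =
     eval_mat s n A emb x * eval_mat s n A emb y - eval_mat s n A emb y * eval_mat s n A emb x"

lemma eval_mat_carrier:
  assumes "\<forall>i\<in>{1..n}. A i \<in> carrier_mat s s"
  shows "eval_mat s n A emb t \<in> carrier_mat s s"
  using assms by (induction t) auto

lemma eval_mat_respects_kcong:
  fixes emb :: "'f::field \<Rightarrow> 'l::field"
  assumes sys: "spin_system n E s A" and two: "(2::'l) \<noteq> 0" and emb: "scalar_hom emb"
    and "kcong n E t u"
  shows "eval_mat s n A emb t = eval_mat s n A emb u"
proof -
  have car: "\<forall>i\<in>{1..n}. A i \<in> carrier_mat s s" using sys by (simp add: spin_system_def)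
  note C = eval_mat_carrier[OF car]
  from \<open>kcong n E t u\<close> show ?thesis
  proof (induction rule: kcong.induct)
    case (jacobi x y z)
    show ?case using jacobi_mat[OF C C C] by simp
  next
    case (rel_adj i j)
    then show ?case
      using spin_double_commutator_iff[of "A i" s "A j"] sys two scalar_hom_minus_one[OF emb]
      by (simp add: spin_system_def)
  next
    case (rel_nonadj i j)
    hence "A i \<in> carrier_mat s s" "A j \<in> carrier_mat s s" "A i * A j = A j * A i"
      using sys unfolding spin_system_def by blast+
    with rel_nonadj show ?case using commutator_eq_zero_iff by simp
  qed (insert emb scalar_hom_minus_one[OF emb],
       simp_all add: scalar_hom_def C carrier_matD[OF C] square_mat_distribs[where s=s],
       (rule eq_matI, auto simp: C carrier_matD[OF C] algebra_simps)+)
qed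

lemma eval_mat_gen_spin_rep:
  fixes emb :: "'f::field \<Rightarrow> 'l::field"
  assumes s: "s \<ge> 1" and sys: "spin_system n E s A"
    and two: "(2::'l) \<noteq> 0" and emb: "scalar_hom emb"
  shows "gen_spin_rep n E emb s (eval_mat s n A emb)"
  using s sys eval_mat_carrier[of n A s emb] eval_mat_respects_kcong[OF sys two emb]
  unfolding gen_spin_rep_def k_lie_hom_def spin_system_def by auto

theorem mainTheorem5:
  fixes emb :: "'f::field_char_0 \<Rightarrow> 'l::field" and I :: 'l
    and n :: nat and E :: "nat \<Rightarrow> nat \<Rightarrow> bool"
  assumes emb_inj: "inj emb"
    and emb_one: "emb 1 = 1"
    and emb_add: "\<And>a b. emb (a + b) = emb a + emb b"
    and emb_mult: "\<And>a b. emb (a * b) = emb a * emb b"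
    and I_sq: "I * I = -1"
    and L_gen: "\<And>x. \<exists>a b. x = emb a + emb b * I"
    and E_sym: "\<And>i j. E i j \<Longrightarrow> E j i"
    and E_irrefl: "\<And>i. \<not> E i i"
  shows
    "(\<forall>s \<rho>. gen_spin_rep n E emb s \<rho> \<longrightarrow>
        (\<forall>i\<in>{1..n}. \<forall>j\<in>{1..n}.
           (i \<noteq> j \<and> \<not> E i j \<longrightarrow> \<rho> (Gen i) * \<rho> (Gen j) = \<rho> (Gen j) * \<rho> (Gen i)) \<and>
           (E i j \<longrightarrow> \<rho> (Gen i) * \<rho> (Gen j) = - (\<rho> (Gen j) * \<rho> (Gen i)))))
   \<and>
    (\<forall>s (A :: nat \<Rightarrow> 'l mat). s \<ge> 1 \<longrightarrow>
        (\<forall>i\<in>{1..n}. A i \<in> carrier_mat s s) \<longrightarrow>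
        (\<forall>i\<in>{1..n}. A i * A i = (- (1/4)) \<cdot>\<^sub>m 1\<^sub>m s) \<longrightarrow>
        (\<forall>i\<in>{1..n}. \<forall>j\<in>{1..n}. i \<noteq> j \<and> \<not> E i j \<longrightarrow> A i * A j = A j * A i) \<longrightarrow>
        (\<forall>i\<in>{1..n}. \<forall>j\<in>{1..n}. E i j \<longrightarrow> A i * A j = - (A j * A i)) \<longrightarrow>
        (\<exists>\<rho>. k_lie_hom n E emb s \<rho> \<and> (\<forall>i\<in>{1..n}. \<rho> (Gen i) = A i) \<and>
              gen_spin_rep n E emb s \<rho>))"
proof -
  have emb: "scalar_hom emb" using emb_one emb_add emb_mult by (simp add: scalar_hom_def)
  have two: "(2::'l) \<noteq> 0" using two_neq_zero_via_emb[OF emb_inj emb_one emb_add] .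
  show ?thesis
  proof (intro conjI allI impI)
    fix s \<rho> assume spin: "gen_spin_rep n E emb s \<rho>"
    show "\<forall>i\<in>{1..n}. \<forall>j\<in>{1..n}.
           (i \<noteq> j \<and> \<not> E i j \<longrightarrow> \<rho> (Gen i) * \<rho> (Gen j) = \<rho> (Gen j) * \<rho> (Gen i)) \<and>
           (E i j \<longrightarrow> \<rho> (Gen i) * \<rho> (Gen j) = - (\<rho> (Gen j) * \<rho> (Gen i)))"
      using gen_spin_rep_relations[OF spin scalar_hom_minus_one[OF emb] two] by blast
  next
    fix s and A :: "nat \<Rightarrow> 'l mat"
    assume "s \<ge> 1" "\<forall>i\<in>{1..n}. A i \<in> carrier_mat s s"
      "\<forall>i\<in>{1..n}. A i * A i = (- (1/4)) \<cdot>\<^sub>m 1\<^sub>m s"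
      "\<forall>i\<in>{1..n}. \<forall>j\<in>{1..n}. i \<noteq> j \<and> \<not> E i j \<longrightarrow> A i * A j = A j * A i"
      "\<forall>i\<in>{1..n}. \<forall>j\<in>{1..n}. E i j \<longrightarrow> A i * A j = - (A j * A i)"
    hence "spin_system n E s A" by (simp add: spin_system_def)
    hence "gen_spin_rep n E emb s (eval_mat s n A emb)"
      using eval_mat_gen_spin_rep \<open>s \<ge> 1\<close> two emb by blast
    thus "\<exists>\<rho>. k_lie_hom n E emb s \<rho> \<and> (\<forall>i\<in>{1..n}. \<rho> (Gen i) = A i) \<and>
              gen_spin_rep n E emb s \<rho>"
      by (intro exI[of _ "eval_mat s n A emb"]) (simp add: gen_spin_rep_def)
  qed
qed

end
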